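(* Let $N,N_1,N_2$ be distribution functions such that $N=(N_1+N_2)/2$ and $\mathbf{u}(N_1),\mathbf{u}(N_2)<\infty$. Put ${\scriptstyle\Delta}N=N_1-N$ and $${\scriptstyle\Delta}\mathbf{u}=\int_0^\infty{\scriptstyle\Delta}N(t)\,dt,\qquad \mathbf{u}_{\scriptstyle\Delta}=\int_0^\infty|{\scriptstyle\Delta}N(t)|\,dt,\qquad \mathbf{u}=\mathbf{u}(N).$$ Then $$\mathbf{u}^*(N)-\frac{\mathbf{u}^*(N_1)+\mathbf{u}^*(N_2)}{2}\ge\frac12\cdot\frac{(\mathbf{u}_{\scriptstyle\Delta})^2}{\mathbf{u}}\ge\frac12\cdot\frac{({\scriptstyle\Delta}\mathbf{u})^2}{\mathbf{u}}$$ (whenever $\mathbf{u}>0$, so that the right-hand sides are defined).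
   Context: A distribution function is a nonincreasing function $N:[0,\infty)\to[0,1]$. For such $N$ we set $$\mathbf{u}(N)=\int_0^\infty N(t)\,dt,\qquad \mathbf{u}^*(N)=\int_0^\infty\psi_0(N(t))\,dt,\qquad \psi_0(s)=s\ln(e/s).$$ *)

theory Defs
  imports "HOL-Analysis.Analysis"
begin

text \<open>A distribution function: nonincreasing on [0,oo) with values in [0,1].
  Functions are total on real; only their values on [0,oo) matter.\<close>
definition distribution_function :: "(real \<Rightarrow> real) \<Rightarrow> bool" where
  "distribution_function N \<longleftrightarrow>
     (\<forall>s t. 0 \<le> s \<longrightarrow> s \<le> t \<longrightarrow> N t \<le> N s) \<and> (\<forall>t\<ge>0. 0 \<le> N t \<and> N t \<le> 1)"

text \<open>psi_0(s) = s ln(e/s), with psi_0(0) = 0 (continuous extension).\<close>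
definition psi0 :: "real \<Rightarrow> real" where
  "psi0 s = (if s = 0 then 0 else s * ln (exp 1 / s))"

definition u :: "(real \<Rightarrow> real) \<Rightarrow> ennreal" where
  "u N = (\<integral>\<^sup>+ t. ennreal (N t) * indicator {0..} t \<partial>lborel)"

definition ustar :: "(real \<Rightarrow> real) \<Rightarrow> ennreal" where
  "ustar N = (\<integral>\<^sup>+ t. ennreal (psi0 (N t)) * indicator {0..} t \<partial>lborel)"

end

theory Submission
  imports Defs
begin

(* The midpoint Jensen gap of the concave function psi0 is quadratically large: writing
   a = m (1 + x), b = m (1 - x) with m = (a + b) / 2, one gets
   2 psi0 m - psi0 a - psi0 b = m ((1 + x) ln (1 + x) + (1 - x) ln (1 - x)) >= m x^2 = (a - m)^2 / m.
   Integrating this pointwise bound gives u*(N) - (u*(N1) + u*(N2)) / 2 >= 1/2 \<integral> (N1 - N)^2 / N,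
   and integrating |d| <= c d^2 / f + f / (4 c) with the optimal c turns the right-hand side into
   the Cauchy-Schwarz bound (\<integral> |d|)^2 / \<integral> f. *)

(* Valid for every real s, since ln 0 = 0 and ln (- s) = ln s. *)
lemma psi0_eq: "psi0 s = s - s * ln s"
  by (simp add: psi0_def ln_div algebra_simps)

lemma psi0_nonneg:
  assumes "0 \<le> s" "s \<le> exp 1"
  shows "0 \<le> psi0 s"
proof (cases "s = 0")
  case False
  then have "1 \<le> exp 1 / s" using assms by (simp add: field_simps)
  then show ?thesis using assms by (simp add: psi0_def)
qed (simp add: psi0_def)

lemma psi0_mult:
  assumes "0 \<le> m" "0 \<le> y"
  shows "psi0 (m * y) = y * psi0 m - m * y * ln y"
  using assms by (cases "m = 0 \<or> y = 0") (auto simp: psi0_eq ln_mult algebra_simps)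

lemma two_mult_le_ln_one_plus_minus_ln_one_minus:
  fixes x :: real
  assumes "0 \<le> x" "x < 1"
  shows "2 * x \<le> ln (1 + x) - ln (1 - x)"
proof -
  let ?g = "\<lambda>x::real. ln (1 + x) - ln (1 - x) - 2 * x"
  have "?g 0 \<le> ?g x"
  proof (rule DERIV_nonneg_imp_nondecreasing[OF assms(1)])
    fix y assume y: "0 \<le> y" "y \<le> x"
    have "DERIV ?g y :> 1 / (1 + y) + 1 / (1 - y) - 2"
      using y assms by (auto intro!: derivative_eq_intros)
    moreover have "1 / (1 + y) + 1 / (1 - y) - 2 = 2 * y\<^sup>2 / ((1 + y) * (1 - y))"
      using y assms mult_right_mono[of y 1 y] by (simp add: field_simps power2_eq_square)
    moreover have "0 \<le> 2 * y\<^sup>2 / ((1 + y) * (1 - y))"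
      using y assms by simp
    ultimately show "\<exists>d. DERIV ?g y :> d \<and> 0 \<le> d" by auto
  qed
  then show ?thesis by simp
qed

lemma square_le_mult_ln_one_plus_plus_mult_ln_one_minus:
  fixes x :: real
  assumes "\<bar>x\<bar> \<le> 1"
  shows "x\<^sup>2 \<le> (1 + x) * ln (1 + x) + (1 - x) * ln (1 - x)"
proof -
  let ?h = "\<lambda>x::real. (1 + x) * ln (1 + x) + (1 - x) * ln (1 - x) - x\<^sup>2"
  have "0 \<le> ?h x" if "0 \<le> x" "x \<le> 1" for x
  proof (cases "x = 1")
    case True
    have "ln (1/2::real) \<le> 1/2 - 1" by (rule ln_le_minus_one) auto
    then show ?thesis using True by (simp add: ln_div)
  next
    case False
    have "?h 0 \<le> ?h x"
    proof (rule DERIV_nonneg_imp_nondecreasing[OF \<open>0 \<le> x\<close>])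
      fix y assume y: "0 \<le> y" "y \<le> x"
      have "DERIV ?h y :> ln (1 + y) + (1 + y) / (1 + y) - ln (1 - y) - (1 - y) / (1 - y) - 2 * y"
        using y that False by (auto intro!: derivative_eq_intros)
      then have "DERIV ?h y :> ln (1 + y) - ln (1 - y) - 2 * y"
        using y that False by simp
      moreover have "0 \<le> ln (1 + y) - ln (1 - y) - 2 * y"
        using two_mult_le_ln_one_plus_minus_ln_one_minus[of y] y that False by simp
      ultimately show "\<exists>d. DERIV ?h y :> d \<and> 0 \<le> d" by blast
    qed
    then show ?thesis by simp
  qed
  from this[of "\<bar>x\<bar>"] show ?thesis
    using assms by (cases "0 \<le> x") (auto simp: algebra_simps)
qed

(* For a = b = 0 the quadratic term is 0 / 0 = 0. *)
lemma psi0_midpoint_gap: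
  fixes a b :: real
  assumes "0 \<le> a" "0 \<le> b"
  shows "psi0 a + psi0 b + (a - (a + b) / 2)\<^sup>2 / ((a + b) / 2) \<le> 2 * psi0 ((a + b) / 2)"
proof (cases "a + b = 0")
  case True
  then show ?thesis using assms by (simp add: psi0_def)
next
  case False
  define m where "m = (a + b) / 2"
  define x where "x = (a - b) / (a + b)"
  have "0 < m" using assms False by (simp add: m_def)
  have "\<bar>x\<bar> \<le> 1" using assms False by (simp add: x_def divide_le_eq_1 abs_le_iff)
  have a: "a = m * (1 + x)" and b: "b = m * (1 - x)"
    using False by (simp_all add: m_def x_def field_simps)
  have "psi0 a = (1 + x) * psi0 m - m * (1 + x) * ln (1 + x)"
    "psi0 b = (1 - x) * psi0 m - m * (1 - x) * ln (1 - x)"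
    unfolding a b using \<open>0 < m\<close> \<open>\<bar>x\<bar> \<le> 1\<close> by (simp_all add: psi0_mult)
  then have "psi0 a + psi0 b = 2 * psi0 m - m * ((1 + x) * ln (1 + x) + (1 - x) * ln (1 - x))"
    by (simp add: algebra_simps)
  moreover have "(a - m)\<^sup>2 / m = m * x\<^sup>2"
    using \<open>0 < m\<close> by (simp add: a field_simps power2_eq_square)
  moreover have "m * x\<^sup>2 \<le> m * ((1 + x) * ln (1 + x) + (1 - x) * ln (1 - x))"
    using square_le_mult_ln_one_plus_plus_mult_ln_one_minus[OF \<open>\<bar>x\<bar> \<le> 1\<close>] \<open>0 < m\<close> by simp
  ultimately show ?thesis by (simp add: m_def)
qed

lemma psi0_measurable [measurable]: "psi0 \<in> borel_measurable borel"
  unfolding psi0_def[abs_def] by measurable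

lemma nn_integral_psi0_midpoint_gap:
  fixes f g m :: "'a \<Rightarrow> real"
  assumes [measurable]: "f \<in> borel_measurable M" "g \<in> borel_measurable M"
    and f: "\<And>x. 0 \<le> f x \<and> f x \<le> exp 1" and g: "\<And>x. 0 \<le> g x \<and> g x \<le> exp 1"
    and m: "\<And>x. m x = (f x + g x) / 2"
  shows "(\<integral>\<^sup>+x. psi0 (f x) \<partial>M) + (\<integral>\<^sup>+x. psi0 (g x) \<partial>M) + (\<integral>\<^sup>+x. (f x - m x)\<^sup>2 / m x \<partial>M)
         \<le> 2 * (\<integral>\<^sup>+x. psi0 (m x) \<partial>M)"
proof -
  have [measurable]: "m \<in> borel_measurable M"
    unfolding m[abs_def] by measurable
  have "ennreal (psi0 (f x)) + ennreal (psi0 (g x)) + ennreal ((f x - m x)\<^sup>2 / m x)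
        \<le> 2 * ennreal (psi0 (m x))" for x
  proof -
    have "0 \<le> psi0 (f x)" "0 \<le> psi0 (g x)" "0 \<le> (f x - m x)\<^sup>2 / m x"
      using f g psi0_nonneg by (auto simp: m)
    then have "ennreal (psi0 (f x)) + ennreal (psi0 (g x)) + ennreal ((f x - m x)\<^sup>2 / m x)
        = ennreal (psi0 (f x) + psi0 (g x) + (f x - m x)\<^sup>2 / m x)"
      by (simp add: ennreal_plus)
    also have "\<dots> \<le> ennreal (2 * psi0 (m x))"
      using psi0_midpoint_gap f g by (intro ennreal_leI) (auto simp: m)
    also have "\<dots> = 2 * ennreal (psi0 (m x))"
      by (subst ennreal_mult') simp_all
    finally show ?thesis .
  qed
  then have "(\<integral>\<^sup>+x. ennreal (psi0 (f x)) + ennreal (psi0 (g x)) + ennreal ((f x - m x)\<^sup>2 / m x) \<partial>M)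
        \<le> (\<integral>\<^sup>+x. 2 * ennreal (psi0 (m x)) \<partial>M)"
    by (intro nn_integral_mono)
  then show ?thesis by (simp add: nn_integral_add nn_integral_cmult)
qed

lemma square_integral_abs_div_le_nn_integral:
  fixes d f :: "'a \<Rightarrow> real"
  assumes d: "integrable M d" and f: "integrable M f" "\<And>x. 0 \<le> f x"
    and d_zero: "\<And>x. f x = 0 \<Longrightarrow> d x = 0" and U_pos: "0 < (\<integral>x. f x \<partial>M)"
  shows "ennreal ((\<integral>x. \<bar>d x\<bar> \<partial>M)\<^sup>2 / (\<integral>x. f x \<partial>M)) \<le> (\<integral>\<^sup>+x. (d x)\<^sup>2 / f x \<partial>M)"
proof (cases "(\<integral>\<^sup>+x. (d x)\<^sup>2 / f x \<partial>M) = \<infinity>")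
  case False
  define A where "A = (\<integral>x. \<bar>d x\<bar> \<partial>M)"
  define U where "U = (\<integral>x. f x \<partial>M)"
  have [measurable]: "d \<in> borel_measurable M" "f \<in> borel_measurable M"
    using d f by auto
  have q: "integrable M (\<lambda>x. (d x)\<^sup>2 / f x)"
    using False f(2) by (intro integrableI_nonneg) (auto simp: top.not_eq_extremum)
  define B where "B = (\<integral>x. (d x)\<^sup>2 / f x \<partial>M)"
  have "A\<^sup>2 / U \<le> B"
  proof (cases "A = 0")
    case False
    then have "0 < A" unfolding A_def by (metis integral_nonneg_AE abs_ge_zero AE_I2 order_le_less)
    define c where "c = U / (2 * A)"
    have "0 < c" using \<open>0 < A\<close> U_pos by (simp add: c_def U_def)
    have "\<bar>d x\<bar> \<le> c * ((d x)\<^sup>2 / f x) + f x / (4 * c)" for x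
    proof (cases "f x = 0")
      case False
      then have "0 < f x" using f(2) order_le_less by metis
      have "c * ((d x)\<^sup>2 / f x) + f x / (4 * c) - \<bar>d x\<bar> = (2 * c * \<bar>d x\<bar> - f x)\<^sup>2 / (4 * c * f x)"
        using \<open>0 < f x\<close> \<open>0 < c\<close> by (simp add: field_simps power2_eq_square)
      also have "\<dots> \<ge> 0" using \<open>0 < f x\<close> \<open>0 < c\<close> by simp
      finally show ?thesis by simp
    qed (use d_zero in simp)
    then have "A \<le> (\<integral>x. c * ((d x)\<^sup>2 / f x) + f x / (4 * c) \<partial>M)"
      unfolding A_def using d f q
      by (intro integral_mono Bochner_Integration.integrable_add integrable_mult_right integrable_divide) auto
    also have "\<dots> = c * B + U / (4 * c)"
      using q f by (subst Bochner_Integration.integral_add) (auto simp: B_def U_def simp del: times_divide_eq_right)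
    also have "\<dots> = U * B / (2 * A) + A / 2"
      using \<open>0 < A\<close> U_pos by (simp add: c_def U_def field_simps)
    finally show ?thesis
      using \<open>0 < A\<close> U_pos by (simp add: U_def field_simps power2_eq_square)
  qed (use f(2) in \<open>simp add: B_def integral_nonneg_AE\<close>)
  then show ?thesis
    using q f(2) by (simp add: A_def U_def B_def nn_integral_eq_integral)
qed simp

lemma nn_integral_psi0_midpoint_ge:
  fixes f g m :: "'a \<Rightarrow> real"
  assumes int: "integrable M f" "integrable M g"
    and f: "\<And>x. 0 \<le> f x \<and> f x \<le> exp 1" and g: "\<And>x. 0 \<le> g x \<and> g x \<le> exp 1"
    and m: "\<And>x. m x = (f x + g x) / 2" and U_pos: "0 < (\<integral>x. m x \<partial>M)"
  shows "((\<integral>\<^sup>+x. psi0 (f x) \<partial>M) + (\<integral>\<^sup>+x. psi0 (g x) \<partial>M)) / 2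
           + ennreal ((1/2) * (\<integral>x. \<bar>f x - m x\<bar> \<partial>M)\<^sup>2 / (\<integral>x. m x \<partial>M))
         \<le> (\<integral>\<^sup>+x. psi0 (m x) \<partial>M)"
proof -
  let ?F = "(\<integral>\<^sup>+x. psi0 (f x) \<partial>M)" and ?G = "(\<integral>\<^sup>+x. psi0 (g x) \<partial>M)"
  let ?r = "(\<integral>x. \<bar>f x - m x\<bar> \<partial>M)\<^sup>2 / (\<integral>x. m x \<partial>M)"
  have int_m: "integrable M m"
    using int by (simp add: m[abs_def])
  have "ennreal ?r \<le> (\<integral>\<^sup>+x. (f x - m x)\<^sup>2 / m x \<partial>M)"
    using int int_m f g U_pos by (intro square_integral_abs_div_le_nn_integral) (auto simp: m add_nonneg_eq_0_iff)
  moreover have "?F + ?G + (\<integral>\<^sup>+x. (f x - m x)\<^sup>2 / m x \<partial>M) \<le> 2 * (\<integral>\<^sup>+x. psi0 (m x) \<partial>M)"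
    using int f g m by (intro nn_integral_psi0_midpoint_gap) auto
  ultimately have "(?F + ?G + ennreal ?r) / 2 \<le> 2 * (\<integral>\<^sup>+x. psi0 (m x) \<partial>M) / 2"
    by (intro divide_right_mono_ennreal) (rule order_trans[OF add_left_mono])
  also have "\<dots> = (\<integral>\<^sup>+x. psi0 (m x) \<partial>M)"
    by (subst mult.commute) (simp add: mult_divide_eq_ennreal)
  finally have "(?F + ?G + ennreal ?r) / 2 \<le> (\<integral>\<^sup>+x. psi0 (m x) \<partial>M)" .
  moreover have "ennreal ?r / 2 = ennreal ((1/2) * ?r)"
    using U_pos by (simp add: ennreal_divide_numeral)
  ultimately show ?thesis
    by (simp add: add_divide_distrib_ennreal)
qed

definition zero_extension :: "(real \<Rightarrow> real) \<Rightarrow> real \<Rightarrow> real" where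
  "zero_extension N t = N t * indicator {0..} t"

lemma zero_extension_measurable:
  assumes "distribution_function N"
  shows "zero_extension N \<in> borel_measurable borel"
proof -
  have "mono (\<lambda>t. - N (max t 0))"
    using assms unfolding distribution_function_def mono_def by (auto simp: max_def)
  then have [measurable]: "(\<lambda>t. N (max t 0)) \<in> borel_measurable borel"
    using borel_measurable_mono borel_measurable_uminus_eq by blast
  have "zero_extension N = (\<lambda>t. N (max t 0) * indicator {0..} t)"
    by (auto simp: zero_extension_def indicator_def max_def)
  then show ?thesis by simp
qed

lemma zero_extension_bounds:
  "distribution_function N \<Longrightarrow> 0 \<le> zero_extension N t \<and> zero_extension N t \<le> 1"
  by (auto simp: distribution_function_def zero_extension_def indicator_def)

lemma u_eq_nn_integral_zero_extension: "u N = (\<integral>\<^sup>+t. zero_extension N t \<partial>lborel)"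
  unfolding u_def zero_extension_def by (intro nn_integral_cong) (auto simp: indicator_def)

lemma ustar_eq_nn_integral_zero_extension:
  "ustar N = (\<integral>\<^sup>+t. psi0 (zero_extension N t) \<partial>lborel)"
  unfolding ustar_def zero_extension_def by (intro nn_integral_cong) (auto simp: indicator_def psi0_def)

lemma set_integral_nonneg_eq_integral_zero_extension:
  "(LINT t:{0..}|lborel. h (N1 t) (N t)) = (\<integral>t. h (zero_extension N1 t) (zero_extension N t) \<partial>lborel)"
  if "h 0 0 = 0"
  unfolding set_lebesgue_integral_def zero_extension_def
  using that by (intro Bochner_Integration.integral_cong) (auto simp: indicator_def)

lemma integrable_zero_extension:
  "distribution_function N \<Longrightarrow> u N < \<infinity> \<Longrightarrow> integrable lborel (zero_extension N)"
  by (auto intro!: integrableI_nonneg zero_extension_measurable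
      simp: u_eq_nn_integral_zero_extension zero_extension_bounds)

lemma integral_zero_extension_eq_enn2real_u:
  "distribution_function N \<Longrightarrow> u N < \<infinity> \<Longrightarrow> (\<integral>t. zero_extension N t \<partial>lborel) = enn2real (u N)"
  by (simp add: u_eq_nn_integral_zero_extension nn_integral_eq_integral
      integrable_zero_extension zero_extension_bounds)

lemma square_integral_le_square_integral_abs:
  fixes f :: "'a \<Rightarrow> real"
  shows "(\<integral>x. f x \<partial>M)\<^sup>2 \<le> (\<integral>x. \<bar>f x\<bar> \<partial>M)\<^sup>2"
proof -
  have "\<bar>\<integral>x. f x \<partial>M\<bar> \<le> \<bar>\<integral>x. \<bar>f x\<bar> \<partial>M\<bar>"
    using integral_norm_bound[of M f] by simp
  then show ?thesis
    by (simp only: abs_le_square_iff)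
qed

theorem corollary5p2:
  fixes N N1 N2 :: "real \<Rightarrow> real"
  assumes "distribution_function N" "distribution_function N1" "distribution_function N2"
    and "\<And>t. t \<ge> 0 \<Longrightarrow> N t = (N1 t + N2 t) / 2"
    and "u N1 < \<infinity>" "u N2 < \<infinity>"
    and "enn2real (u N) > 0"
  shows
    "ustar N \<ge> (ustar N1 + ustar N2) / 2
        + ennreal ((1/2) * (LINT t:{0..}|lborel. \<bar>N1 t - N t\<bar>)\<^sup>2 / enn2real (u N))
     \<and> (1/2) * (LINT t:{0..}|lborel. \<bar>N1 t - N t\<bar>)\<^sup>2 / enn2real (u N)
        \<ge> (1/2) * (LINT t:{0..}|lborel. N1 t - N t)\<^sup>2 / enn2real (u N)"
proof -
  define F F1 F2 where "F = zero_extension N" "F1 = zero_extension N1" "F2 = zero_extension N2"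
  have "u N < \<infinity>"
    using assms(7) by (cases "u N") auto
  then have U: "enn2real (u N) = (\<integral>t. F t \<partial>lborel)"
    using assms(1) by (simp add: F_F1_F2_def integral_zero_extension_eq_enn2real_u)
  have "(ustar N1 + ustar N2) / 2
      + ennreal ((1/2) * (\<integral>t. \<bar>F1 t - F t\<bar> \<partial>lborel)\<^sup>2 / enn2real (u N)) \<le> ustar N"
    unfolding U F_F1_F2_def ustar_eq_nn_integral_zero_extension
  proof (rule nn_integral_psi0_midpoint_ge)
    show "integrable lborel (zero_extension N1)" "integrable lborel (zero_extension N2)"
      using assms(2,3,5,6) by (simp_all add: integrable_zero_extension)
    show "0 \<le> zero_extension N1 t \<and> zero_extension N1 t \<le> exp 1"
      "0 \<le> zero_extension N2 t \<and> zero_extension N2 t \<le> exp 1" for t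
      using assms(2,3)[THEN zero_extension_bounds, of t] exp_ge_add_one_self[of 1] by linarith+
    show "zero_extension N t = (zero_extension N1 t + zero_extension N2 t) / 2" for t
      using assms(4)[of t] by (simp add: zero_extension_def indicator_def)
  qed (use assms(7) U F_F1_F2_def in simp)
  moreover have "(1/2) * (\<integral>t. F1 t - F t \<partial>lborel)\<^sup>2 / enn2real (u N)
      \<le> (1/2) * (\<integral>t. \<bar>F1 t - F t\<bar> \<partial>lborel)\<^sup>2 / enn2real (u N)"
    using assms(7) square_integral_le_square_integral_abs by (intro divide_right_mono mult_left_mono) auto
  moreover have "(LINT t:{0..}|lborel. \<bar>N1 t - N t\<bar>) = (\<integral>t. \<bar>F1 t - F t\<bar> \<partial>lborel)"
      "(LINT t:{0..}|lborel. N1 t - N t) = (\<integral>t. F1 t - F t \<partial>lborel)"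
    unfolding F_F1_F2_def
    by (rule set_integral_nonneg_eq_integral_zero_extension[where h = "\<lambda>a b. \<bar>a - b\<bar>"], simp)
      (rule set_integral_nonneg_eq_integral_zero_extension[where h = "\<lambda>a b. a - b"], simp)
  ultimately show ?thesis
    by (simp only:)
qed

end
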